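(* Let $1\le p<\infty$ and let $v=(v_n)_{n\in\mathbb{Z}}$ be a sequence of positive numbers with $\sup_{n\in\mathbb{Z}}v_n/v_{n+1}<\infty$, so that the backward shift $B(x_n)_{n\in\mathbb{Z}}=(x_{n+1})_{n\in\mathbb{Z}}$ is a bounded operator on $Y=\ell^p(\mathbb{Z},v)$. Then the following are equivalent: (i) the set of all vectors in $Y$ whose $B$-orbits are distributionally near to $0$ is residual in $Y$; (ii) there exists a nonzero vector $x\in Y$ whose $B$-orbit is distributionally near to $0$; (iii) there exists $A\subseteq\mathbb{N}$ with $\overline{\mathrm{dens}}(A)=1$ such that $\lim_{n\in A}v_{-n}=0$.
   Context: $\ell^p(\mathbb{Z},v)=\{(x_n)_{n\in\mathbb{Z}}:\sum_{n\in\mathbb{Z}}|x_n|^pv_n<\infty\}$ with norm $(\sum_{n}|x_n|^pv_n)^{1/p}$. For $A\subseteq\mathbb{N}$, $\overline{\mathrm{dens}}(A)=\limsup_{N}\frac{\operatorname{card}(A\cap[1,N])}{N}$. The orbit of $x$ under $T$ is distributionally near to $0$ if there is $A\subseteq\mathbb{N}$ with $\overline{\mathrm{dens}}(A)=1$ and $\|T^nx\|\to0$ as $n\to\infty$, $n\in A$. *)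

theory Defs
  imports "HOL-Analysis.Analysis"
begin

definition lp_weighted :: "real \<Rightarrow> (int \<Rightarrow> real) \<Rightarrow> (int \<Rightarrow> real) set" where
  "lp_weighted p v = {x. (\<lambda>k. \<bar>x k\<bar> powr p * v k) summable_on UNIV}"

definition wnorm :: "real \<Rightarrow> (int \<Rightarrow> real) \<Rightarrow> (int \<Rightarrow> real) \<Rightarrow> real" where
  "wnorm p v x = (\<Sum>\<^sub>\<infinity>k. \<bar>x k\<bar> powr p * v k) powr (1 / p)"

definition lp_topology :: "real \<Rightarrow> (int \<Rightarrow> real) \<Rightarrow> (int \<Rightarrow> real) topology" where
  "lp_topology p v = Metric_space.mtopology (lp_weighted p v) (\<lambda>x y. wnorm p v (x - y))"

definition residual_in :: "'a topology \<Rightarrow> 'a set \<Rightarrow> bool" where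
  "residual_in X S \<longleftrightarrow> (\<exists>\<F>. countable \<F> \<and>
      (\<forall>U\<in>\<F>. openin X U \<and> X closure_of U = topspace X) \<and>
      topspace X \<inter> \<Inter>\<F> \<subseteq> S)"

definition bshift :: "(int \<Rightarrow> real) \<Rightarrow> (int \<Rightarrow> real)" where
  "bshift x = (\<lambda>k. x (k + 1))"

definition upper_dens :: "nat set \<Rightarrow> ereal" where
  "upper_dens A = limsup (\<lambda>N. ereal (real (card (A \<inter> {1..N})) / real N))"

definition distr_near_zero :: "real \<Rightarrow> (int \<Rightarrow> real) \<Rightarrow> (int \<Rightarrow> real) \<Rightarrow> bool" where
  "distr_near_zero p v x \<longleftrightarrow> (\<exists>A. upper_dens A = 1 \<and>
     filterlim (\<lambda>n. wnorm p v ((bshift ^^ n) x)) (nhds 0) (inf sequentially (principal A)))"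

end

theory Submission
  imports Defs "HOL-Library.Function_Algebras"
begin

(* Write B for the backward shift and c for a bound on v_n / v_(n+1), so that
   v_a <= c^(b - a) v_b for a <= b.  If x is supported in [-K, K], this gives
   ||B^(m+K) x||^p <= D v_(-m); hence when v_(-m) -> 0 along a set A of upper density one,
   every finitely supported vector (for instance e_0) has an orbit distributionally near 0,
   along the shifted set A + K.  Conversely, if x_j <> 0 then |x_j|^p v_(j-n) <= ||B^n x||^p,
   which passes the distributional convergence of the orbit of x on to (v_(-n)).

   A sequence tends to 0 along some set of upper density one iff each level set
   {m. |f m| < 1/(k+1)} has upper density one; the nontrivial direction is a diagonal
   construction.  So the vectors whose orbits are distributionally near 0 form a countable
   intersection of the sets small_orbit_set k N, each open (it constrains only finitely many
   times m) and dense (it contains every finitely supported vector).  Conversely Y is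
   complete, so by Baire a residual set is dense and thus contains a nonzero vector. *)

section \<open>Sets of upper density one\<close>

lemma le_Limsup_iff:
  fixes X :: "_ \<Rightarrow> 'a :: {complete_linorder, dense_linorder}"
  shows "C \<le> Limsup F X \<longleftrightarrow> (\<forall>y<C. \<exists>\<^sub>F x in F. y < X x)"
proof (intro iffI allI impI)
  fix y assume C: "C \<le> Limsup F X" and "y < C"
  show "\<exists>\<^sub>F x in F. y < X x"
  proof (rule ccontr)
    assume "\<not> (\<exists>\<^sub>F x in F. y < X x)"
    then have "\<forall>\<^sub>F x in F. X x \<le> y"
      unfolding not_frequently by (rule eventually_mono) (simp add: not_less)
    then have "Limsup F X \<le> y" by (rule Limsup_bounded)
    with C \<open>y < C\<close> show False by simp
  qed
next
  assume freq: "\<forall>y<C. \<exists>\<^sub>F x in F. y < X x"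
  show "C \<le> Limsup F X"
  proof (rule ccontr)
    assume "\<not> C \<le> Limsup F X"
    then have "Limsup F X < C" by (simp add: not_le)
    then obtain z where z: "Limsup F X < z" "z < C" by (blast dest: dense)
    have "\<exists>\<^sub>F x in F. X x < z \<and> z < X x"
      using frequently_eventually_conj[OF freq[rule_format, OF z(2)] Limsup_lessD[OF z(1)]] .
    then have "\<exists>\<^sub>F x in F. False" by (rule frequently_elim1) (meson order.asym)
    then show False by simp
  qed
qed

lemma card_Int_atLeastAtMost_le: "card (A \<inter> {1..n}) \<le> n"
  using card_mono[of "{1..n}" "A \<inter> {1..n}"] by auto

lemma upper_dens_eq_1_iff:
  "upper_dens A = 1 \<longleftrightarrow> (\<forall>r<1. \<exists>\<^sub>F n in sequentially. r * real n < real (card (A \<inter> {1..n})))"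
proof -
  define X where "X n = ereal (real (card (A \<inter> {1..n})) / real n)" for n
  have "X n \<le> 1" for n
    using card_Int_atLeastAtMost_le[of A n] by (cases "n = 0") (auto simp: X_def divide_le_eq)
  then have "upper_dens A \<le> 1"
    unfolding upper_dens_def X_def[symmetric] by (intro Limsup_bounded) simp
  then have "upper_dens A = 1 \<longleftrightarrow> (\<forall>y<1. \<exists>\<^sub>F n in sequentially. y < X n)"
    unfolding upper_dens_def X_def[symmetric] le_Limsup_iff[symmetric] by auto
  also have "\<dots> \<longleftrightarrow> (\<forall>r<1. \<exists>\<^sub>F n in sequentially. ereal r < X n)"
  proof (intro iffI allI impI)
    fix y :: ereal assume "\<forall>r<1. \<exists>\<^sub>F n in sequentially. ereal r < X n" and "y < 1"
    then show "\<exists>\<^sub>F n in sequentially. y < X n"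
      by (cases y) (auto simp: X_def)
  qed auto
  also have "\<dots> \<longleftrightarrow> (\<forall>r<1. \<exists>\<^sub>F n in sequentially. r * real n < real (card (A \<inter> {1..n})))"
  proof -
    have "ereal r < X n \<longleftrightarrow> r * real n < real (card (A \<inter> {1..n}))" if "n > 0" for r n
      using that by (simp add: X_def pos_less_divide_eq)
    then show ?thesis
      by (intro all_cong frequently_cong[OF eventually_gt_at_top[of 0]]) auto
  qed
  finally show ?thesis .
qed

lemma card_Int_atLeastAtMost_shift_le:
  assumes "\<And>m. m \<ge> m0 \<Longrightarrow> m \<in> A \<Longrightarrow> m + i \<in> B"
  shows "card (A \<inter> {1..n}) \<le> card (B \<inter> {1..n}) + (m0 + i)"
proof -
  have "A \<inter> {1..n} \<subseteq> (\<lambda>m. m - i) ` (B \<inter> {1..n}) \<union> {..<m0} \<union> {n - i<..n}"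
  proof
    fix m assume m: "m \<in> A \<inter> {1..n}"
    show "m \<in> (\<lambda>m. m - i) ` (B \<inter> {1..n}) \<union> {..<m0} \<union> {n - i<..n}"
    proof (cases "m0 \<le> m \<and> m + i \<le> n")
      case True
      then have "m + i \<in> B \<inter> {1..n}" using assms m by auto
      then show ?thesis by (intro UnI1 rev_image_eqI[of "m + i"]) auto
    qed (use m in auto)
  qed
  then have "card (A \<inter> {1..n}) \<le> card ((\<lambda>m. m - i) ` (B \<inter> {1..n}) \<union> {..<m0} \<union> {n - i<..n})"
    by (intro card_mono) auto
  also have "\<dots> \<le> card ((\<lambda>m. m - i) ` (B \<inter> {1..n})) + card {..<m0} + card {n - i<..n}"
    by (meson add_le_mono card_Un_le le_refl order_trans)
  also have "\<dots> \<le> card (B \<inter> {1..n}) + m0 + i"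
    using card_image_le[of "B \<inter> {1..n}" "\<lambda>m. m - i"] by simp
  finally show ?thesis by simp
qed

lemma upper_dens_eq_1_shift:
  assumes A: "upper_dens A = 1" and AB: "\<forall>\<^sub>F m in sequentially. m \<in> A \<longrightarrow> m + i \<in> B"
  shows "upper_dens B = 1"
  unfolding upper_dens_eq_1_iff
proof (intro allI impI)
  fix r :: real assume "r < 1"
  obtain m0 where "\<And>m. m \<ge> m0 \<Longrightarrow> m \<in> A \<Longrightarrow> m + i \<in> B"
    using AB by (auto simp: eventually_sequentially)
  then have card_le: "real (card (A \<inter> {1..n})) \<le> real (card (B \<inter> {1..n})) + real (m0 + i)" for n
    by (metis card_Int_atLeastAtMost_shift_le of_nat_add of_nat_le_iff)
  define r' where "r' = (1 + r) / 2"
  have "r < r'" "r' < 1" using \<open>r < 1\<close> by (auto simp: r'_def)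
  then have freq: "\<exists>\<^sub>F n in sequentially. r' * real n < real (card (A \<inter> {1..n}))"
    using A by (simp add: upper_dens_eq_1_iff)
  have "filterlim (\<lambda>n. (r' - r) * real n) at_top sequentially"
    using \<open>r < r'\<close> by (intro filterlim_tendsto_pos_mult_at_top[OF tendsto_const] filterlim_real_sequentially) auto
  then have "\<forall>\<^sub>F n in sequentially. real (m0 + i) \<le> (r' - r) * real n"
    by (simp add: filterlim_at_top)
  with freq have "\<exists>\<^sub>F n in sequentially.
      r' * real n < real (card (A \<inter> {1..n})) \<and> real (m0 + i) \<le> (r' - r) * real n"
    by (rule frequently_eventually_frequently)
  then show "\<exists>\<^sub>F n in sequentially. r * real n < real (card (B \<inter> {1..n}))"
  proof (rule frequently_elim1)
    fix n assume "r' * real n < real (card (A \<inter> {1..n})) \<and> real (m0 + i) \<le> (r' - r) * real n"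
    then show "r * real n < real (card (B \<inter> {1..n}))"
      using card_le[of n] by (simp add: left_diff_distrib)
  qed
qed

lemma upper_dens_image_add:
  "upper_dens A = 1 \<Longrightarrow> upper_dens ((\<lambda>m. m + i) ` A) = 1"
  by (erule upper_dens_eq_1_shift[where i = i]) auto

lemma card_Int_atLeastAtMost_gt_if_tail_subset:
  assumes "Suc k * n0 \<le> n" and E: "(1 - 1 / Suc k) * real n < real (card (E \<inter> {1..n}))"
    and "E \<inter> {n0<..n} \<subseteq> A"
  shows "(1 - 2 / Suc k) * real n < real (card (A \<inter> {1..n}))"
proof -
  have "card (E \<inter> {1..n}) \<le> card (E \<inter> {n0<..n} \<union> {1..n0})"
    by (intro card_mono) auto
  also have "\<dots> \<le> card (E \<inter> {n0<..n}) + n0"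
    using card_Un_le[of "E \<inter> {n0<..n}" "{1..n0}"] by simp
  also have "card (E \<inter> {n0<..n}) \<le> card (A \<inter> {1..n})"
    using assms(3) by (intro card_mono) auto
  finally have "real (card (E \<inter> {1..n})) \<le> real (card (A \<inter> {1..n})) + real n0"
    by simp
  moreover have "real n0 \<le> real n / real (Suc k)"
    using assms(1) by (simp add: le_divide_eq mult.commute del: of_nat_Suc flip: of_nat_mult)
  moreover have "(1 - 2 / Suc k) * real n = (1 - 1 / Suc k) * real n - real n / real (Suc k)"
    by (simp add: algebra_simps)
  ultimately show ?thesis using E by linarith
qed

lemma upper_dens_eq_1_checkpoints:
  assumes "\<And>k. upper_dens (E k) = 1"
  obtains N where "\<And>k. Suc k * N k < N (Suc k)"
    and "\<And>k. (1 - 1 / Suc k) * real (N (Suc k)) < real (card (E k \<inter> {1..N (Suc k)}))"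
proof -
  have "\<exists>y. Suc k * x < y \<and> (1 - 1 / Suc k) * real y < real (card (E k \<inter> {1..y}))" for k x
  proof -
    have "\<exists>\<^sub>F n in sequentially. (1 - 1 / Suc k) * real n < real (card (E k \<inter> {1..n}))"
      using assms[of k] by (simp add: upper_dens_eq_1_iff)
    then obtain y where "Suc (Suc k * x) \<le> y" "(1 - 1 / Suc k) * real y < real (card (E k \<inter> {1..y}))"
      unfolding frequently_sequentially by blast
    then show ?thesis by (intro exI[of _ y]) auto
  qed
  then have "\<exists>N. \<forall>k. Suc k * N k < N (Suc k) \<and>
      (1 - 1 / Suc k) * real (N (Suc k)) < real (card (E k \<inter> {1..N (Suc k)}))"
    by (rule dependent_nat_choice[where P = "\<lambda>_ _. True", simplified])
  then obtain N where "\<forall>k. Suc k * N k < N (Suc k) \<and>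
      (1 - 1 / Suc k) * real (N (Suc k)) < real (card (E k \<inter> {1..N (Suc k)}))" ..
  then show thesis by (intro that[of N]) auto
qed

lemma upper_dens_eq_1_diagonal:
  assumes dec: "\<And>k. E (Suc k) \<subseteq> E k" and dens: "\<And>k. upper_dens (E k) = 1"
  obtains A where "upper_dens A = 1" and "\<And>k. \<forall>\<^sub>F n in sequentially. n \<in> A \<longrightarrow> n \<in> E k"
proof -
  obtain N where N_step: "\<And>k. Suc k * N k < N (Suc k)"
    and N_dens: "\<And>k. (1 - 1 / Suc k) * real (N (Suc k)) < real (card (E k \<inter> {1..N (Suc k)}))"
    using upper_dens_eq_1_checkpoints[of E, OF dens] by blast
  have "strict_mono N"
    by (rule strict_monoI_Suc, rule le_less_trans[OF _ N_step]) simp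
  have E_antimono: "j \<le> k \<Longrightarrow> E k \<subseteq> E j" for j k
    using lift_Suc_antimono_le[of E, OF dec] by blast
  \<comment> \<open>As \<open>N k \<le> N (Suc k) / Suc k\<close>, everything before \<open>N k\<close> is negligible at time \<open>N (Suc k)\<close>.\<close>
  define A where "A = (\<Union>k. E k \<inter> {N k<..N (Suc k)})"
  show thesis
  proof
    show "\<forall>\<^sub>F n in sequentially. n \<in> A \<longrightarrow> n \<in> E j" for j
      using eventually_gt_at_top[of "N j"]
    proof (rule eventually_mono, intro impI)
      fix n assume "N j < n" "n \<in> A"
      then obtain k where k: "n \<in> E k" "N k < n" "n \<le> N (Suc k)" by (auto simp: A_def)
      with \<open>N j < n\<close> have "N j < N (Suc k)" by linarith
      then have "j \<le> k" using \<open>strict_mono N\<close> by (simp add: strict_mono_less)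
      then show "n \<in> E j" using E_antimono k by blast
    qed
    show "upper_dens A = 1"
      unfolding upper_dens_eq_1_iff frequently_sequentially
    proof (intro allI impI)
      fix r :: real and M assume "r < 1"
      obtain k0 where k0: "2 / (1 - r) < real k0" using reals_Archimedean2 by blast
      define k where "k = max k0 M"
      have "real k0 \<le> real (Suc k)" by (simp add: k_def)
      with k0 have "2 / (1 - r) < real (Suc k)" by linarith
      then have "2 / real (Suc k) < 1 - r"
        using \<open>r < 1\<close> by (simp add: pos_divide_less_eq mult.commute)
      then have "r * real (N (Suc k)) \<le> (1 - 2 / Suc k) * real (N (Suc k))"
        by (intro mult_right_mono) auto
      also have "\<dots> < real (card (A \<inter> {1..N (Suc k)}))"
        using less_imp_le[OF N_step[of k]] N_dens[of k]
        by (rule card_Int_atLeastAtMost_gt_if_tail_subset) (auto simp: A_def)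
      finally have "r * real (N (Suc k)) < real (card (A \<inter> {1..N (Suc k)}))" .
      moreover have "M \<le> N (Suc k)"
        using strict_mono_imp_increasing[OF \<open>strict_mono N\<close>, of "Suc k"] by (simp add: k_def)
      ultimately show "\<exists>n\<ge>M. r * real n < real (card (A \<inter> {1..n}))" by blast
    qed
  qed
qed

lemma tendsto_along_image_add:
  assumes lim: "((\<lambda>m. f (m + i)) \<longlongrightarrow> l) (inf sequentially (principal A))"
  shows "(f \<longlongrightarrow> l) (inf sequentially (principal ((\<lambda>m. m + i) ` A)))"
proof -
  have le: "inf sequentially (principal ((\<lambda>m. m + i) ` A))
      \<le> filtermap (\<lambda>m. m + i) (inf sequentially (principal A))"
  proof (rule filter_leI)
    fix P assume "eventually P (filtermap (\<lambda>m. m + i) (inf sequentially (principal A)))"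
    then obtain M where "\<And>m. M \<le> m \<Longrightarrow> m \<in> A \<Longrightarrow> P (m + i)"
      by (auto simp: eventually_filtermap eventually_inf_principal eventually_sequentially)
    then show "eventually P (inf sequentially (principal ((\<lambda>m. m + i) ` A)))"
      unfolding eventually_inf_principal eventually_sequentially
      by (intro exI[of _ "M + i"]) auto
  qed
  from lim have "filterlim f (nhds l) (filtermap (\<lambda>m. m + i) (inf sequentially (principal A)))"
    by (simp add: filterlim_filtermap)
  then show ?thesis by (rule filterlim_mono[OF _ order_refl le])
qed

lemma antimono_upper_dens_eq_1_iff:
  assumes E_antimono: "\<And>j k. j \<le> k \<Longrightarrow> E k \<subseteq> E j"
  shows "(\<forall>k. upper_dens (E k) = 1) \<longleftrightarrow>
    (\<forall>k. \<exists>\<^sub>F n in sequentially. (1 - 1 / Suc k) * real n < real (card (E k \<inter> {1..n})))"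
proof
  assume freq: "\<forall>k. \<exists>\<^sub>F n in sequentially. (1 - 1 / Suc k) * real n < real (card (E k \<inter> {1..n}))"
  show "\<forall>k. upper_dens (E k) = 1"
    unfolding upper_dens_eq_1_iff
  proof (intro allI impI)
    fix k and r :: real assume "r < 1"
    then have "0 < 1 - r" by simp
    then obtain j0 where "1 / Suc j0 < 1 - r" by (rule nat_approx_posE)
    define j where "j = max j0 k"
    have "1 / real (Suc j) \<le> 1 / real (Suc j0)"
      by (intro divide_left_mono) (auto simp: j_def)
    with \<open>1 / Suc j0 < 1 - r\<close> have r_le: "r * real n \<le> (1 - 1 / Suc j) * real n" for n
      by (intro mult_right_mono) auto
    have card_le: "real (card (E j \<inter> {1..n})) \<le> real (card (E k \<inter> {1..n}))" for n
      using E_antimono[of k j] by (auto simp: j_def intro!: card_mono)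
    from freq[rule_format, of j]
    show "\<exists>\<^sub>F n in sequentially. r * real n < real (card (E k \<inter> {1..n}))"
      by (rule frequently_elim1) (use r_le card_le in \<open>smt (verit)\<close>)
  qed
qed (simp add: upper_dens_eq_1_iff)

lemma tendsto_along_upper_dens_1_iff:
  fixes f :: "nat \<Rightarrow> 'a::metric_space"
  shows "(\<exists>A. upper_dens A = 1 \<and> (f \<longlongrightarrow> l) (inf sequentially (principal A))) \<longleftrightarrow>
    (\<forall>k. \<exists>\<^sub>F n in sequentially.
       (1 - 1 / Suc k) * real n < real (card ({m. dist (f m) l < 1 / Suc k} \<inter> {1..n})))"
proof -
  define E where "E k = {m. dist (f m) l < 1 / Suc k}" for k
  have E_antimono: "E k \<subseteq> E j" if "j \<le> k" for j k
  proof -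
    have "1 / real (Suc k) \<le> 1 / real (Suc j)" using that by (intro divide_left_mono) auto
    then show ?thesis by (auto simp: E_def)
  qed
  have "(\<exists>A. upper_dens A = 1 \<and> (f \<longlongrightarrow> l) (inf sequentially (principal A))) \<longleftrightarrow>
      (\<forall>k. upper_dens (E k) = 1)"
  proof
    assume "\<forall>k. upper_dens (E k) = 1"
    moreover have "E (Suc k) \<subseteq> E k" for k by (rule E_antimono) simp
    ultimately obtain A where A: "upper_dens A = 1" "\<And>k. \<forall>\<^sub>F n in sequentially. n \<in> A \<longrightarrow> n \<in> E k"
      using upper_dens_eq_1_diagonal[of E] by blast
    have "(f \<longlongrightarrow> l) (inf sequentially (principal A))"
    proof (rule tendstoI)
      fix e :: real assume "e > 0"
      then obtain k where "1 / Suc k < e" by (rule nat_approx_posE)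
      then show "\<forall>\<^sub>F n in inf sequentially (principal A). dist (f n) l < e"
        using A(2)[of k] by (auto simp: eventually_inf_principal E_def elim!: eventually_mono)
    qed
    with A(1) show "\<exists>A. upper_dens A = 1 \<and> (f \<longlongrightarrow> l) (inf sequentially (principal A))" by blast
  next
    assume "\<exists>A. upper_dens A = 1 \<and> (f \<longlongrightarrow> l) (inf sequentially (principal A))"
    then obtain A where A: "upper_dens A = 1" "(f \<longlongrightarrow> l) (inf sequentially (principal A))" by blast
    show "\<forall>k. upper_dens (E k) = 1"
    proof
      fix k
      have "\<forall>\<^sub>F n in inf sequentially (principal A). dist (f n) l < 1 / Suc k"
        using tendstoD[OF A(2)] by simp
      then have "\<forall>\<^sub>F n in sequentially. n \<in> A \<longrightarrow> n + 0 \<in> E k"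
        by (simp add: eventually_inf_principal E_def)
      then show "upper_dens (E k) = 1" by (rule upper_dens_eq_1_shift[OF A(1)])
    qed
  qed
  also have "\<dots> \<longleftrightarrow> (\<forall>k. \<exists>\<^sub>F n in sequentially. (1 - 1 / Suc k) * real n < real (card (E k \<inter> {1..n})))"
    using E_antimono by (rule antimono_upper_dens_eq_1_iff)
  finally show ?thesis by (simp add: E_def)
qed

section \<open>The weighted sequence space\<close>

lemma powr_convex_combination:
  fixes p s t l :: real
  assumes "1 \<le> p" "0 \<le> s" "0 \<le> t" "0 \<le> l" "l \<le> 1"
  shows "(l * s + (1 - l) * t) powr p \<le> l * s powr p + (1 - l) * t powr p"
proof (cases "s = 0 \<or> t = 0")
  case True
  have scale: "(m * u) powr p \<le> m * u powr p" if "0 \<le> m" "m \<le> 1" "0 \<le> u" for m u :: real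
  proof -
    have "m powr p \<le> m powr 1" using powr_mono'[of 1 p m] that assms(1) by auto
    then have "m powr p * u powr p \<le> m * u powr p" using that by (simp add: mult_right_mono)
    then show ?thesis using that by (simp add: powr_mult)
  qed
  show ?thesis
  proof (cases "s = 0")
    case True
    then show ?thesis using scale[of "1 - l" t] assms by simp
  next
    case False
    with \<open>s = 0 \<or> t = 0\<close> have "t = 0" by simp
    then show ?thesis using scale[of l s] assms by simp
  qed
next
  case False
  with assms have "s > 0" "t > 0" by auto
  with convex_onD[OF powr_convex[OF assms(1)], of "1 - l" s t] assms show ?thesis
    by (simp add: algebra_simps)
qed

lemma abs_add_powr_le:
  fixes p a b s t :: real
  assumes "1 \<le> p" "0 < a" "0 < b"
  shows "\<bar>s + t\<bar> powr p \<le>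
    (a + b) powr p * (a / (a + b) * (\<bar>s\<bar> / a) powr p + b / (a + b) * (\<bar>t\<bar> / b) powr p)"
proof -
  define l where "l = a / (a + b)"
  have l: "0 \<le> l" "l \<le> 1" "1 - l = b / (a + b)"
    using assms by (auto simp: l_def field_simps)
  have "l * (\<bar>s\<bar> / a) = \<bar>s\<bar> / (a + b)" "(1 - l) * (\<bar>t\<bar> / b) = \<bar>t\<bar> / (a + b)"
    using assms by (simp add: l_def, simp add: l(3))
  then have "l * (\<bar>s\<bar> / a) + (1 - l) * (\<bar>t\<bar> / b) = (\<bar>s\<bar> + \<bar>t\<bar>) / (a + b)"
    by (simp add: add_divide_distrib)
  then have "\<bar>s + t\<bar> / (a + b) \<le> l * (\<bar>s\<bar> / a) + (1 - l) * (\<bar>t\<bar> / b)"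
    using assms by (simp add: divide_right_mono abs_triangle_ineq)
  then have "(\<bar>s + t\<bar> / (a + b)) powr p \<le> (l * (\<bar>s\<bar> / a) + (1 - l) * (\<bar>t\<bar> / b)) powr p"
    using assms by (intro powr_mono2) auto
  also have "\<dots> \<le> l * (\<bar>s\<bar> / a) powr p + (1 - l) * (\<bar>t\<bar> / b) powr p"
    using assms l by (intro powr_convex_combination) auto
  finally have "(\<bar>s + t\<bar> / (a + b)) powr p \<le> l * (\<bar>s\<bar> / a) powr p + (1 - l) * (\<bar>t\<bar> / b) powr p" .
  moreover have "\<bar>s + t\<bar> powr p = (a + b) powr p * (\<bar>s + t\<bar> / (a + b)) powr p"
    using assms by (simp add: powr_divide)
  ultimately show ?thesis
    unfolding l_def[symmetric] l(3)[symmetric] by (simp add: mult_left_mono)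
qed

lemma bshift_funpow: "(bshift ^^ n) x = (\<lambda>k. x (k + int n))"
  by (induction n) (auto simp: bshift_def algebra_simps)

lemma indicator_0_nonzero: "indicator {0} \<noteq> (0 :: 'a::zero \<Rightarrow> real)"
  by (metis indicator_simps(1) insertI1 zero_fun_apply zero_neq_one)

locale weighted_backward_shift =
  fixes p :: real and v :: "int \<Rightarrow> real"
  assumes one_le_p: "1 \<le> p"
    and v_pos: "\<And>n. v n > 0"
    and v_ratio_bdd: "bdd_above (range (\<lambda>n. v n / v (n + 1)))"
begin

abbreviation Y where "Y \<equiv> lp_weighted p v"

definition wterm :: "(int \<Rightarrow> real) \<Rightarrow> int \<Rightarrow> real" where
  "wterm x k = \<bar>x k\<bar> powr p * v k"

definition wsum :: "(int \<Rightarrow> real) \<Rightarrow> real" where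
  "wsum x = (\<Sum>\<^sub>\<infinity>k. wterm x k)"

lemma p_pos: "p > 0"
  using one_le_p by simp

lemma mem_Y_iff: "x \<in> Y \<longleftrightarrow> wterm x summable_on UNIV"
  by (simp add: lp_weighted_def wterm_def[abs_def])

lemma wnorm_eq: "wnorm p v x = wsum x powr (1 / p)"
  by (simp add: wnorm_def wsum_def wterm_def)

lemma wterm_nonneg: "wterm x k \<ge> 0"
  using v_pos[of k] by (simp add: wterm_def)

lemma wsum_nonneg: "wsum x \<ge> 0"
  unfolding wsum_def by (rule infsum_nonneg) (simp add: wterm_nonneg)

lemma wnorm_nonneg: "wnorm p v x \<ge> 0"
  by (simp add: wnorm_eq)

lemma wsum_eq_wnorm_powr: "wsum x = wnorm p v x powr p"
  using wsum_nonneg[of x] p_pos by (simp add: wnorm_eq powr_powr)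

lemma wterm_le_wsum: "x \<in> Y \<Longrightarrow> wterm x k \<le> wsum x"
  unfolding wsum_def mem_Y_iff
  using finite_sum_le_infsum[of "wterm x" UNIV "{k}"] wterm_nonneg by simp

lemma wnorm_eq_0_iff: "x \<in> Y \<Longrightarrow> wnorm p v x = 0 \<longleftrightarrow> x = 0"
proof
  assume "x \<in> Y" "wnorm p v x = 0"
  then have "wsum x = 0" using wsum_nonneg[of x] by (simp add: wnorm_eq)
  show "x = 0"
  proof
    fix k
    have "wterm x k = 0"
      using nonneg_infsum_le_0D[of "wterm x" UNIV k] \<open>x \<in> Y\<close> \<open>wsum x = 0\<close> wterm_nonneg
      by (auto simp: wsum_def mem_Y_iff)
    then show "x k = 0 k" using v_pos[of k] by (simp add: wterm_def)
  qed
qed (simp add: wnorm_eq wsum_def wterm_def)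

lemma uminus_in_Y: "x \<in> Y \<Longrightarrow> - x \<in> Y"
  by (simp add: mem_Y_iff wterm_def[abs_def])

lemma wnorm_minus_commute: "wnorm p v (x - y) = wnorm p v (y - x)"
  by (simp add: wnorm_def abs_minus_commute)

lemma minkowski:
  assumes "x \<in> Y" "y \<in> Y"
  shows "x + y \<in> Y \<and> wnorm p v (x + y) \<le> wnorm p v x + wnorm p v y"
proof (cases "wnorm p v x = 0 \<or> wnorm p v y = 0")
  case True
  with assms wnorm_eq_0_iff show ?thesis by (auto simp: wnorm_nonneg)
next
  case False
  define a where "a = wnorm p v x"
  define b where "b = wnorm p v y"
  have "a > 0" "b > 0" using False wnorm_nonneg by (auto simp: a_def b_def order_le_less)
  \<comment> \<open>Normalising by \<open>a\<close> and \<open>b\<close>, convexity gives a pointwise bound summing to \<open>(a + b) powr p\<close>.\<close>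
  define \<alpha> where "\<alpha> = a / (a + b) / a powr p"
  define \<beta> where "\<beta> = b / (a + b) / b powr p"
  define g where "g k = (a + b) powr p * (\<alpha> * wterm x k + \<beta> * wterm y k)" for k
  have g_summable: "g summable_on UNIV"
    using assms unfolding g_def mem_Y_iff by (intro summable_on_cmult_right summable_on_add)
  have wterm_le: "wterm (x + y) k \<le> g k" for k
    using mult_right_mono[OF abs_add_powr_le[OF one_le_p \<open>a > 0\<close> \<open>b > 0\<close>, of "x k" "y k"]
        less_imp_le[OF v_pos[of k]]]
    by (simp add: g_def \<alpha>_def \<beta>_def wterm_def powr_divide algebra_simps)
  have "x + y \<in> Y"
    unfolding mem_Y_iff by (rule summable_on_comparison_test[OF g_summable wterm_le]) (simp add: wterm_nonneg)
  have "wsum (x + y) \<le> (\<Sum>\<^sub>\<infinity>k. g k)"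
    unfolding wsum_def using \<open>x + y \<in> Y\<close> g_summable wterm_le by (intro infsum_mono) (auto simp: mem_Y_iff)
  also have "\<dots> = (a + b) powr p * (\<alpha> * wsum x + \<beta> * wsum y)"
    using assms unfolding g_def wsum_def mem_Y_iff
    by (simp only: infsum_cmult_right' infsum_add summable_on_cmult_right)
  also have "\<dots> = (a + b) powr p"
    using \<open>a > 0\<close> \<open>b > 0\<close>
    by (simp add: \<alpha>_def \<beta>_def wsum_eq_wnorm_powr flip: a_def b_def add_divide_distrib)
  finally have "wsum (x + y) powr (1 / p) \<le> ((a + b) powr p) powr (1 / p)"
    using wsum_nonneg p_pos by (intro powr_mono2) auto
  then show ?thesis
    using \<open>x + y \<in> Y\<close> \<open>a > 0\<close> \<open>b > 0\<close> p_pos by (simp add: wnorm_eq[symmetric] powr_powr a_def b_def)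
qed

lemma add_in_Y: "x \<in> Y \<Longrightarrow> y \<in> Y \<Longrightarrow> x + y \<in> Y"
  using minkowski by blast

lemma diff_in_Y: "x \<in> Y \<Longrightarrow> y \<in> Y \<Longrightarrow> x - y \<in> Y"
  using add_in_Y[of x "- y"] uminus_in_Y by simp

lemma wnorm_triangle: "x \<in> Y \<Longrightarrow> y \<in> Y \<Longrightarrow> wnorm p v (x + y) \<le> wnorm p v x + wnorm p v y"
  using minkowski by blast

lemma Metric_space_Y: "Metric_space Y (\<lambda>x y. wnorm p v (x - y))"
proof
  show "wnorm p v (x - y) = 0 \<longleftrightarrow> x = y" if "x \<in> Y" "y \<in> Y" for x y
    using wnorm_eq_0_iff[OF diff_in_Y[OF that]] by simp
  show "wnorm p v (x - z) \<le> wnorm p v (x - y) + wnorm p v (y - z)" if "x \<in> Y" "y \<in> Y" "z \<in> Y" for x y z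
    using wnorm_triangle[OF diff_in_Y diff_in_Y, of x y y z] that by simp
qed (simp_all add: wnorm_nonneg wnorm_minus_commute)

end

sublocale weighted_backward_shift \<subseteq> Y: Metric_space Y "\<lambda>x y. wnorm p v (x - y)"
  by (rule Metric_space_Y)

context weighted_backward_shift
begin

lemma lp_topology_eq: "lp_topology p v = Y.mtopology"
  by (simp add: lp_topology_def)

lemma wnorm_le_iff:
  assumes "0 \<le> e" shows "wnorm p v x \<le> e \<longleftrightarrow> wsum x \<le> e powr p"
proof
  assume "wnorm p v x \<le> e"
  then have "wnorm p v x powr p \<le> e powr p" using p_pos wnorm_nonneg by (intro powr_mono2) auto
  then show "wsum x \<le> e powr p" by (simp add: wsum_eq_wnorm_powr)
next
  assume "wsum x \<le> e powr p"
  then have "wsum x powr (1 / p) \<le> (e powr p) powr (1 / p)" using p_pos wsum_nonneg by (intro powr_mono2) auto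
  then show "wnorm p v x \<le> e" using p_pos assms by (simp add: wnorm_eq powr_powr)
qed

lemma abs_mult_v_powr_le_wnorm:
  assumes "x \<in> Y" shows "\<bar>x k\<bar> * v k powr (1 / p) \<le> wnorm p v x"
proof -
  have "(\<bar>x k\<bar> powr p * v k) powr (1 / p) \<le> wsum x powr (1 / p)"
    using wterm_le_wsum[OF assms, of k] wterm_nonneg[of x k] p_pos
    by (intro powr_mono2) (auto simp: wterm_def)
  then show ?thesis
    using p_pos v_pos[of k] by (simp add: wnorm_eq powr_mult powr_powr)
qed

lemma wsum_le_if_pointwise_limit:
  assumes lim: "\<And>k. (\<lambda>n. x n k) \<longlonglongrightarrow> z k"
    and bound: "\<forall>\<^sub>F n in sequentially. x n \<in> Y \<and> wsum (x n) \<le> C"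
  shows "z \<in> Y \<and> wsum z \<le> C"
proof -
  have finite_sums_le: "sum (wterm z) F \<le> C" if "finite F" for F
  proof (rule tendsto_le[OF sequentially_bot tendsto_const])
    show "(\<lambda>n. sum (wterm (x n)) F) \<longlonglongrightarrow> sum (wterm z) F"
      unfolding wterm_def using p_pos by (intro tendsto_intros lim) auto
    from bound show "\<forall>\<^sub>F n in sequentially. sum (wterm (x n)) F \<le> C"
    proof eventually_elim
      case (elim n)
      then have "sum (wterm (x n)) F \<le> wsum (x n)"
        unfolding wsum_def mem_Y_iff using \<open>finite F\<close> by (intro finite_sum_le_infsum) (auto simp: wterm_nonneg)
      with elim show ?case by simp
    qed
  qed
  have "wterm z summable_on UNIV"
    by (rule nonneg_bdd_above_summable_on)
      (auto simp: wterm_nonneg bdd_above_def intro!: exI[of _ C] finite_sums_le)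
  moreover from this have "wsum z \<le> C"
    unfolding wsum_def by (rule infsum_le_finite_sums) (rule finite_sums_le)
  ultimately show ?thesis by (simp add: mem_Y_iff)
qed

lemma MCauchy_coordinate_Cauchy:
  assumes "Y.MCauchy \<sigma>" shows "Cauchy (\<lambda>n. \<sigma> n k)"
proof (rule CauchyI)
  fix e :: real assume "e > 0"
  from assms have \<sigma>_Y: "\<And>n. \<sigma> n \<in> Y"
    and cauchy: "\<And>\<epsilon>. \<epsilon> > 0 \<Longrightarrow> \<exists>N. \<forall>n n'. N \<le> n \<longrightarrow> N \<le> n' \<longrightarrow> wnorm p v (\<sigma> n - \<sigma> n') < \<epsilon>"
    by (auto simp: Y.MCauchy_def)
  obtain N where N: "\<forall>n n'. N \<le> n \<longrightarrow> N \<le> n' \<longrightarrow> wnorm p v (\<sigma> n - \<sigma> n') < e * v k powr (1 / p)"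
    using cauchy[of "e * v k powr (1 / p)"] \<open>e > 0\<close> v_pos[of k] by auto
  have "\<bar>\<sigma> m k - \<sigma> n k\<bar> < e" if "N \<le> m" "N \<le> n" for m n
  proof -
    have "\<bar>\<sigma> m k - \<sigma> n k\<bar> * v k powr (1 / p) < e * v k powr (1 / p)"
      using abs_mult_v_powr_le_wnorm[OF diff_in_Y[OF \<sigma>_Y \<sigma>_Y], of m n k] N that by fastforce
    then show ?thesis using v_pos[of k] by simp
  qed
  then show "\<exists>M. \<forall>m\<ge>M. \<forall>n\<ge>M. norm (\<sigma> m k - \<sigma> n k) < e" by auto
qed

lemma MCauchy_tail_wsum_le:
  assumes "Y.MCauchy \<sigma>" and z: "\<And>k. (\<lambda>n. \<sigma> n k) \<longlonglongrightarrow> z k" and "e > 0"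
  shows "\<exists>N. \<forall>n\<ge>N. \<sigma> n - z \<in> Y \<and> wsum (\<sigma> n - z) \<le> e powr p"
proof -
  from assms(1) have \<sigma>_Y: "\<And>n. \<sigma> n \<in> Y" by (auto simp: Y.MCauchy_def)
  obtain N where N: "\<forall>n n'. N \<le> n \<longrightarrow> N \<le> n' \<longrightarrow> wnorm p v (\<sigma> n - \<sigma> n') < e"
    using assms(1) \<open>e > 0\<close> unfolding Y.MCauchy_def by blast
  have "\<sigma> n - z \<in> Y \<and> wsum (\<sigma> n - z) \<le> e powr p" if "N \<le> n" for n
  proof (rule wsum_le_if_pointwise_limit)
    show "(\<lambda>m. (\<sigma> n - \<sigma> m) k) \<longlonglongrightarrow> (\<sigma> n - z) k" for k
      using z by (auto intro: tendsto_diff)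
    show "\<forall>\<^sub>F m in sequentially. \<sigma> n - \<sigma> m \<in> Y \<and> wsum (\<sigma> n - \<sigma> m) \<le> e powr p"
      using eventually_ge_at_top[of N]
    proof eventually_elim
      case (elim m)
      with N that have "wnorm p v (\<sigma> n - \<sigma> m) \<le> e" by (simp add: less_imp_le)
      then show ?case using wnorm_le_iff[of e] \<open>e > 0\<close> diff_in_Y[OF \<sigma>_Y \<sigma>_Y] by simp
    qed
  qed
  then show ?thesis by blast
qed

lemma mcomplete_Y: "Y.mcomplete"
  unfolding Y.mcomplete_def
proof (intro allI impI)
  fix \<sigma> assume "Y.MCauchy \<sigma>"
  then have \<sigma>_Y: "\<And>n. \<sigma> n \<in> Y" by (auto simp: Y.MCauchy_def)
  define z where "z k = lim (\<lambda>n. \<sigma> n k)" for k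
  have z: "(\<lambda>n. \<sigma> n k) \<longlonglongrightarrow> z k" for k
    using MCauchy_coordinate_Cauchy[OF \<open>Y.MCauchy \<sigma>\<close>, of k]
    by (simp add: z_def Cauchy_convergent_iff convergent_LIMSEQ_iff)
  note tail = MCauchy_tail_wsum_le[OF \<open>Y.MCauchy \<sigma>\<close> z]
  obtain N where "\<sigma> N - z \<in> Y" using tail[of 1] by auto
  from diff_in_Y[OF \<sigma>_Y[of N] this] have "z \<in> Y" by simp
  have "limitin Y.mtopology \<sigma> z sequentially"
    unfolding Y.limitin_metric
  proof (intro conjI allI impI \<open>z \<in> Y\<close>)
    fix e :: real assume "e > 0"
    then obtain N where N: "\<And>n. N \<le> n \<Longrightarrow> wsum (\<sigma> n - z) \<le> (e / 2) powr p"
      using tail[of "e / 2"] by auto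
    then have "wnorm p v (\<sigma> n - z) < e" if "N \<le> n" for n
      using wnorm_le_iff[of "e / 2" "\<sigma> n - z"] that \<open>e > 0\<close> by fastforce
    then show "\<forall>\<^sub>F n in sequentially. \<sigma> n \<in> Y \<and> wnorm p v (\<sigma> n - z) < e"
      using \<sigma>_Y by (auto simp: eventually_sequentially)
  qed
  then show "\<exists>z. limitin Y.mtopology \<sigma> z sequentially" by blast
qed

section \<open>Powers of the backward shift\<close>

definition ratio_bound :: real where
  "ratio_bound = max 1 (SUP n. v n / v (n + 1))"

lemma ratio_bound_ge_1: "1 \<le> ratio_bound"
  by (simp add: ratio_bound_def)

lemma v_le_ratio_bound: "v n \<le> ratio_bound * v (n + 1)"
proof -
  have "v n / v (n + 1) \<le> (SUP n. v n / v (n + 1))"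
    using v_ratio_bdd by (intro cSUP_upper) auto
  also have "\<dots> \<le> ratio_bound" by (simp add: ratio_bound_def)
  finally show ?thesis using v_pos[of "n + 1"] by (simp add: divide_le_eq)
qed

lemma v_le_ratio_bound_power:
  assumes "a \<le> b" shows "v a \<le> ratio_bound ^ nat (b - a) * v b"
proof -
  have "v a \<le> ratio_bound ^ m * v (a + int m)" for m
  proof (induction m)
    case (Suc m)
    have "ratio_bound ^ m * v (a + int m) \<le> ratio_bound ^ m * (ratio_bound * v (a + int m + 1))"
      using v_le_ratio_bound ratio_bound_ge_1 by (intro mult_left_mono) auto
    with Suc show ?case by (simp add: algebra_simps)
  qed simp
  from this[of "nat (b - a)"] assms show ?thesis by simp
qed

lemma bshift_funpow_reindex:
  "wterm ((bshift ^^ n) x) summable_on UNIV \<longleftrightarrow> (\<lambda>j. \<bar>x j\<bar> powr p * v (j - int n)) summable_on UNIV"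
  "wsum ((bshift ^^ n) x) = (\<Sum>\<^sub>\<infinity>j. \<bar>x j\<bar> powr p * v (j - int n))"
proof -
  have bij: "bij_betw (\<lambda>k. k + int n) UNIV UNIV"
    by (rule bij_betwI[of _ _ _ "\<lambda>k. k - int n"]) auto
  show "wterm ((bshift ^^ n) x) summable_on UNIV \<longleftrightarrow> (\<lambda>j. \<bar>x j\<bar> powr p * v (j - int n)) summable_on UNIV"
    using summable_on_reindex_bij_betw[OF bij, of "\<lambda>j. \<bar>x j\<bar> powr p * v (j - int n)"]
    by (simp add: wterm_def[abs_def] bshift_funpow)
  show "wsum ((bshift ^^ n) x) = (\<Sum>\<^sub>\<infinity>j. \<bar>x j\<bar> powr p * v (j - int n))"
    using infsum_reindex_bij_betw[OF bij, of "\<lambda>j. \<bar>x j\<bar> powr p * v (j - int n)"]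
    by (simp add: wsum_def wterm_def[abs_def] bshift_funpow)
qed

lemma shifted_wterm_le: "\<bar>x j\<bar> powr p * v (j - int n) \<le> ratio_bound ^ n * wterm x j"
  using mult_left_mono[OF v_le_ratio_bound_power[of "j - int n" j], of "\<bar>x j\<bar> powr p"]
  by (simp add: wterm_def algebra_simps)

lemma bshift_funpow_in_Y: "x \<in> Y \<Longrightarrow> (bshift ^^ n) x \<in> Y"
  unfolding mem_Y_iff bshift_funpow_reindex
  by (rule summable_on_comparison_test[OF summable_on_cmult_right shifted_wterm_le])
    (auto simp: less_imp_le v_pos)

lemma wsum_bshift_funpow_le:
  assumes "x \<in> Y" shows "wsum ((bshift ^^ n) x) \<le> ratio_bound ^ n * wsum x"
proof -
  have "wsum ((bshift ^^ n) x) \<le> (\<Sum>\<^sub>\<infinity>j. ratio_bound ^ n * wterm x j)"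
    unfolding bshift_funpow_reindex
    using bshift_funpow_in_Y[OF assms, of n] assms shifted_wterm_le
    by (intro infsum_mono) (auto simp: mem_Y_iff bshift_funpow_reindex intro: summable_on_cmult_right)
  then show ?thesis by (simp add: wsum_def infsum_cmult_right')
qed

lemma wnorm_bshift_funpow_le:
  assumes "x \<in> Y"
  shows "wnorm p v ((bshift ^^ n) x) \<le> (ratio_bound ^ n) powr (1 / p) * wnorm p v x"
proof -
  have "wsum ((bshift ^^ n) x) powr (1 / p) \<le> (ratio_bound ^ n * wsum x) powr (1 / p)"
    using wsum_bshift_funpow_le[OF assms] wsum_nonneg p_pos by (intro powr_mono2) auto
  then show ?thesis
    using ratio_bound_ge_1 wsum_nonneg by (simp add: powr_mult wnorm_eq)
qed

lemma finite_support_in_Y: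
  assumes "\<And>k. x k \<noteq> 0 \<Longrightarrow> \<bar>k\<bar> \<le> int K" shows "x \<in> Y"
  unfolding mem_Y_iff
proof (rule finite_nonzero_values_imp_summable_on)
  have "{k \<in> UNIV. wterm x k \<noteq> 0} \<subseteq> {- int K..int K}"
    using assms by (force simp: wterm_def abs_le_iff)
  then show "finite {k \<in> UNIV. wterm x k \<noteq> 0}" by (rule finite_subset) simp
qed

lemma wsum_bshift_funpow_finite_support_le:
  assumes supp: "\<And>k. x k \<noteq> 0 \<Longrightarrow> \<bar>k\<bar> \<le> int K"
  shows "wsum ((bshift ^^ n) x)
    \<le> ratio_bound ^ (2 * K) * (\<Sum>j = - int K..int K. \<bar>x j\<bar> powr p) * v (int K - int n)"
proof -
  have outside_zero: "x j = 0" if "j \<notin> {- int K..int K}" for j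
    using supp[of j] that by (cases "x j = 0") auto
  have "wsum ((bshift ^^ n) x) = (\<Sum>\<^sub>\<infinity>j\<in>{- int K..int K}. \<bar>x j\<bar> powr p * v (j - int n))"
    unfolding bshift_funpow_reindex by (rule infsum_cong_neutral) (auto simp: outside_zero)
  also have "\<dots> = (\<Sum>j = - int K..int K. \<bar>x j\<bar> powr p * v (j - int n))" by simp
  also have "\<dots> \<le> (\<Sum>j = - int K..int K. \<bar>x j\<bar> powr p * (ratio_bound ^ (2 * K) * v (int K - int n)))"
  proof (rule sum_mono)
    fix j assume j: "j \<in> {- int K..int K}"
    have "v (j - int n) \<le> ratio_bound ^ nat (int K - j) * v (int K - int n)"
      using j v_le_ratio_bound_power[of "j - int n" "int K - int n"] by simp
    also have "\<dots> \<le> ratio_bound ^ (2 * K) * v (int K - int n)"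
      using j ratio_bound_ge_1 v_pos by (intro mult_right_mono power_increasing) (auto simp: less_imp_le)
    finally show "\<bar>x j\<bar> powr p * v (j - int n) \<le> \<bar>x j\<bar> powr p * (ratio_bound ^ (2 * K) * v (int K - int n))"
      by (intro mult_left_mono) auto
  qed
  also have "\<dots> = ratio_bound ^ (2 * K) * (\<Sum>j = - int K..int K. \<bar>x j\<bar> powr p) * v (int K - int n)"
    unfolding sum_distrib_right[symmetric] by (simp add: mult_ac)
  finally show ?thesis .
qed

lemma finite_support_approx:
  assumes "x \<in> Y" "e > 0"
  obtains y K where "\<And>k. y k \<noteq> 0 \<Longrightarrow> \<bar>k\<bar> \<le> int K" and "wnorm p v (x - y) < e"
proof -
  have summable: "wterm x summable_on UNIV" using assms by (simp add: mem_Y_iff)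
  obtain F where F: "finite F" "dist (sum (wterm x) F) (wsum x) \<le> (e / 2) powr p"
    using infsum_finite_approximation[OF summable, of "(e / 2) powr p"] assms by (auto simp: wsum_def)
  obtain K where K: "\<And>k. k \<in> F \<Longrightarrow> nat \<bar>k\<bar> \<le> K"
    using finite_nat_set_iff_bounded_le[of "(\<lambda>k. nat \<bar>k\<bar>) ` F"] F(1) by auto
  define y where "y k = (if k \<in> F then x k else 0)" for k
  have "wsum (x - y) = (\<Sum>\<^sub>\<infinity>k\<in>- F. wterm x k)"
    unfolding wsum_def by (rule infsum_cong_neutral) (auto simp: wterm_def y_def)
  also have "\<dots> = wsum x - sum (wterm x) F"
    using infsum_Un_disjoint[of "wterm x" F "- F"] summable_on_subset_banach[OF summable] F(1)
    by (simp add: wsum_def)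
  also have "\<dots> \<le> (e / 2) powr p" using F by (simp add: dist_real_def)
  finally have "wnorm p v (x - y) \<le> e / 2" using wnorm_le_iff[of "e / 2" "x - y"] assms by simp
  moreover have "\<bar>k\<bar> \<le> int K" if "y k \<noteq> 0" for k
    using K[of k] that by (auto simp: y_def split: if_splits)
  ultimately show thesis using \<open>e > 0\<close> by (intro that[of y K]) auto
qed

lemma distr_near_zero_if_finite_support:
  assumes A: "upper_dens A = 1" and lim: "filterlim (\<lambda>n. v (- int n)) (nhds 0) (inf sequentially (principal A))"
    and supp: "\<And>k. x k \<noteq> 0 \<Longrightarrow> \<bar>k\<bar> \<le> int K"
  shows "distr_near_zero p v x"
proof -
  define D where "D = ratio_bound ^ (2 * K) * (\<Sum>j = - int K..int K. \<bar>x j\<bar> powr p)"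
  have "D \<ge> 0" using ratio_bound_ge_1 by (simp add: D_def sum_nonneg)
  have bound: "wnorm p v ((bshift ^^ (m + K)) x) \<le> (D * v (- int m)) powr (1 / p)" for m
    using wsum_bshift_funpow_finite_support_le[OF supp, where n = "m + K"] wsum_nonneg p_pos
    by (auto simp: wnorm_eq D_def intro!: powr_mono2)
  have "((\<lambda>m. (D * v (- int m)) powr (1 / p)) \<longlongrightarrow> 0) (inf sequentially (principal A))"
    using \<open>D \<ge> 0\<close> v_pos p_pos
    by (intro tendsto_zero_powrI[OF tendsto_mult_right_zero[OF lim] tendsto_const]) (auto simp: less_imp_le)
  then have "((\<lambda>m. wnorm p v ((bshift ^^ (m + K)) x)) \<longlongrightarrow> 0) (inf sequentially (principal A))"
    by (rule Lim_null_comparison[rotated]) (simp add: bound wnorm_nonneg)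
  then have "((\<lambda>n. wnorm p v ((bshift ^^ n) x)) \<longlongrightarrow> 0) (inf sequentially (principal ((\<lambda>m. m + K) ` A)))"
    by (rule tendsto_along_image_add)
  with upper_dens_image_add[OF A] show ?thesis
    unfolding distr_near_zero_def by blast
qed

lemma indicator_0_in_Y: "indicator {0} \<in> Y"
  by (rule finite_support_in_Y[where K = 0]) (simp split: split_indicator_asm)

lemma nonzero_distr_near_zero_if_v_tendsto_zero:
  assumes "upper_dens A = 1" "filterlim (\<lambda>n. v (- int n)) (nhds 0) (inf sequentially (principal A))"
  shows "\<exists>x\<in>Y. x \<noteq> 0 \<and> distr_near_zero p v x"
proof (intro bexI conjI)
  show "distr_near_zero p v (indicator {0})"
    using assms by (rule distr_near_zero_if_finite_support[where K = 0]) (simp split: split_indicator_asm)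
qed (simp_all add: indicator_0_in_Y indicator_0_nonzero)

lemma v_tendsto_zero_if_nonzero_distr_near_zero:
  assumes "x \<in> Y" "x \<noteq> 0" "distr_near_zero p v x"
  shows "\<exists>A. upper_dens A = 1 \<and> filterlim (\<lambda>n. v (- int n)) (nhds 0) (inf sequentially (principal A))"
proof -
  obtain A where A: "upper_dens A = 1"
    and lim: "((\<lambda>n. wnorm p v ((bshift ^^ n) x)) \<longlongrightarrow> 0) (inf sequentially (principal A))"
    using assms(3) by (auto simp: distr_near_zero_def)
  obtain j where "x j \<noteq> 0" using assms(2) by (auto simp: fun_eq_iff)
  \<comment> \<open>\<open>i\<close> makes \<open>- (n + i) \<le> j - n\<close>, so \<open>v (- (n + i))\<close> is controlled by \<open>v (j - n)\<close>.\<close>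
  define i where "i = nat (- j)"
  define C where "C = ratio_bound ^ nat (j + int i) / \<bar>x j\<bar> powr p"
  have bound: "v (- int (n + i)) \<le> C * wnorm p v ((bshift ^^ n) x) powr p" for n
  proof -
    have "\<bar>x j\<bar> powr p * v (j - int n) \<le> wnorm p v ((bshift ^^ n) x) powr p"
      using wterm_le_wsum[OF bshift_funpow_in_Y[OF assms(1)], of n "j - int n"]
      by (simp add: wterm_def bshift_funpow wsum_eq_wnorm_powr)
    then have "v (j - int n) \<le> wnorm p v ((bshift ^^ n) x) powr p / \<bar>x j\<bar> powr p"
      using \<open>x j \<noteq> 0\<close> by (simp add: le_divide_eq mult.commute)
    have "v (- int (n + i)) \<le> ratio_bound ^ nat (j + int i) * v (j - int n)"
      using v_le_ratio_bound_power[of "- int (n + i)" "j - int n"] by (simp add: i_def)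
    also have "\<dots> \<le> ratio_bound ^ nat (j + int i) * (wnorm p v ((bshift ^^ n) x) powr p / \<bar>x j\<bar> powr p)"
      using \<open>v (j - int n) \<le> _\<close> ratio_bound_ge_1 by (intro mult_left_mono) auto
    also have "\<dots> = C * wnorm p v ((bshift ^^ n) x) powr p" by (simp add: C_def)
    finally show ?thesis .
  qed
  have "((\<lambda>n. C * wnorm p v ((bshift ^^ n) x) powr p) \<longlongrightarrow> 0) (inf sequentially (principal A))"
    using p_pos wnorm_nonneg by (intro tendsto_mult_right_zero tendsto_zero_powrI[OF lim tendsto_const]) auto
  then have "((\<lambda>n. v (- int (n + i))) \<longlongrightarrow> 0) (inf sequentially (principal A))"
    by (rule Lim_null_comparison[rotated]) (use bound v_pos in \<open>simp add: less_imp_le\<close>)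
  then have "((\<lambda>n. v (- int n)) \<longlongrightarrow> 0) (inf sequentially (principal ((\<lambda>m. m + i) ` A)))"
    by (rule tendsto_along_image_add)
  with upper_dens_image_add[OF A] show ?thesis by blast
qed

section \<open>Residuality\<close>

definition small_orbit_set :: "nat \<Rightarrow> nat \<Rightarrow> (int \<Rightarrow> real) set" where
  "small_orbit_set k N = {x \<in> Y. \<exists>n\<ge>N. (1 - 1 / Suc k) * real n
     < real (card ({m. wnorm p v ((bshift ^^ m) x) < 1 / Suc k} \<inter> {1..n}))}"

lemma distr_near_zero_iff_small_orbit_sets:
  "x \<in> Y \<Longrightarrow> distr_near_zero p v x \<longleftrightarrow> (\<forall>k N. x \<in> small_orbit_set k N)"
  unfolding distr_near_zero_def tendsto_along_upper_dens_1_iff small_orbit_set_def frequently_sequentially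
  by (simp add: dist_real_def wnorm_nonneg)

lemma openin_wnorm_bshift_funpow_less: "openin Y.mtopology {x \<in> Y. wnorm p v ((bshift ^^ m) x) < e}"
  unfolding Y.openin_mtopology
proof (intro conjI allI impI)
  fix x assume "x \<in> {x \<in> Y. wnorm p v ((bshift ^^ m) x) < e}"
  then have "x \<in> Y" and small: "wnorm p v ((bshift ^^ m) x) < e" by auto
  define c where "c = (ratio_bound ^ m) powr (1 / p)"
  have "c > 0" using ratio_bound_ge_1 by (simp add: c_def)
  define r where "r = (e - wnorm p v ((bshift ^^ m) x)) / c"
  have "r > 0" using small \<open>c > 0\<close> by (simp add: r_def)
  have "Y.mball x r \<subseteq> {x \<in> Y. wnorm p v ((bshift ^^ m) x) < e}"
  proof
    fix y assume "y \<in> Y.mball x r"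
    then have "y \<in> Y" and "wnorm p v (y - x) < r" by (auto simp: wnorm_minus_commute)
    have "(bshift ^^ m) y = (bshift ^^ m) x + (bshift ^^ m) (y - x)"
      by (simp add: bshift_funpow fun_eq_iff)
    then have "wnorm p v ((bshift ^^ m) y) \<le> wnorm p v ((bshift ^^ m) x) + wnorm p v ((bshift ^^ m) (y - x))"
      using wnorm_triangle bshift_funpow_in_Y \<open>x \<in> Y\<close> \<open>y \<in> Y\<close> diff_in_Y by metis
    also have "\<dots> \<le> wnorm p v ((bshift ^^ m) x) + c * wnorm p v (y - x)"
      using wnorm_bshift_funpow_le[OF diff_in_Y[OF \<open>y \<in> Y\<close> \<open>x \<in> Y\<close>]] by (simp add: c_def)
    also have "\<dots> < e"
      using \<open>wnorm p v (y - x) < r\<close> \<open>c > 0\<close> by (simp add: r_def pos_less_divide_eq mult.commute)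
    finally show "y \<in> {x \<in> Y. wnorm p v ((bshift ^^ m) x) < e}" using \<open>y \<in> Y\<close> by simp
  qed
  with \<open>r > 0\<close> show "\<exists>r>0. Y.mball x r \<subseteq> {x \<in> Y. wnorm p v ((bshift ^^ m) x) < e}" by blast
qed auto

lemma openin_small_orbit_set: "openin Y.mtopology (small_orbit_set k N)"
  \<comment> \<open>Membership is witnessed by finitely many times \<open>m \<le> n\<close>, each an open condition.\<close>
proof (subst openin_subopen, intro ballI)
  fix x assume "x \<in> small_orbit_set k N"
  then obtain n where "x \<in> Y" "N \<le> n"
    and card_gt: "(1 - 1 / Suc k) * real n < real (card ({m. wnorm p v ((bshift ^^ m) x) < 1 / Suc k} \<inter> {1..n}))"
    by (auto simp: small_orbit_set_def)
  define E where "E = {m. wnorm p v ((bshift ^^ m) x) < 1 / Suc k} \<inter> {1..n}"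
  define T where "T = (\<Inter>m\<in>E. {y \<in> Y. wnorm p v ((bshift ^^ m) y) < 1 / Suc k})"
  have "0 \<le> (1 - 1 / Suc k) * real n" by simp
  with card_gt have "0 < real (card E)" unfolding E_def by linarith
  then have "E \<noteq> {}" by auto
  have "openin Y.mtopology T"
    unfolding T_def using \<open>E \<noteq> {}\<close> by (intro openin_INT2 openin_wnorm_bshift_funpow_less) (auto simp: E_def)
  moreover have "x \<in> T" using \<open>x \<in> Y\<close> by (auto simp: T_def E_def)
  moreover have "T \<subseteq> small_orbit_set k N"
  proof
    fix y assume "y \<in> T"
    with \<open>E \<noteq> {}\<close> have "y \<in> Y" by (auto simp: T_def)
    have "E \<subseteq> {m. wnorm p v ((bshift ^^ m) y) < 1 / Suc k} \<inter> {1..n}"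
      using \<open>y \<in> T\<close> by (auto simp: T_def E_def)
    then have "card E \<le> card ({m. wnorm p v ((bshift ^^ m) y) < 1 / Suc k} \<inter> {1..n})"
      by (intro card_mono) auto
    with card_gt \<open>y \<in> Y\<close> \<open>N \<le> n\<close> show "y \<in> small_orbit_set k N"
      unfolding small_orbit_set_def E_def[symmetric] by force
  qed
  ultimately show "\<exists>T. openin Y.mtopology T \<and> x \<in> T \<and> T \<subseteq> small_orbit_set k N" by blast
qed

lemma dense_small_orbit_set:
  assumes "upper_dens A = 1" "filterlim (\<lambda>n. v (- int n)) (nhds 0) (inf sequentially (principal A))"
  shows "Y.mtopology closure_of small_orbit_set k N = Y"
proof -
  have "\<exists>y\<in>small_orbit_set k N. y \<in> Y.mball x r" if "x \<in> Y" "r > 0" for x r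
  proof -
    obtain y K where supp: "\<And>k. y k \<noteq> 0 \<Longrightarrow> \<bar>k\<bar> \<le> int K" and "wnorm p v (x - y) < r"
      using finite_support_approx[OF \<open>x \<in> Y\<close> \<open>r > 0\<close>] by blast
    have "y \<in> Y" using supp by (rule finite_support_in_Y)
    moreover have "distr_near_zero p v y"
      using assms supp by (rule distr_near_zero_if_finite_support)
    ultimately show ?thesis
      using \<open>x \<in> Y\<close> \<open>wnorm p v (x - y) < r\<close> distr_near_zero_iff_small_orbit_sets by auto
  qed
  then show ?thesis unfolding Y.metric_closure_of by blast
qed

lemma residual_distr_near_zero_if_v_tendsto_zero:
  assumes "upper_dens A = 1" "filterlim (\<lambda>n. v (- int n)) (nhds 0) (inf sequentially (principal A))"
  shows "residual_in (lp_topology p v) {x \<in> Y. distr_near_zero p v x}"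
  unfolding residual_in_def lp_topology_eq
proof (intro exI conjI)
  show "countable (range (\<lambda>(k, N). small_orbit_set k N))" by simp
  show "\<forall>U\<in>range (\<lambda>(k, N). small_orbit_set k N).
      openin Y.mtopology U \<and> Y.mtopology closure_of U = topspace Y.mtopology"
    using openin_small_orbit_set dense_small_orbit_set[OF assms] by auto
  show "topspace Y.mtopology \<inter> \<Inter> (range (\<lambda>(k, N). small_orbit_set k N)) \<subseteq> {x \<in> Y. distr_near_zero p v x}"
    using distr_near_zero_iff_small_orbit_sets by auto
qed

lemma nonzero_distr_near_zero_if_residual:
  assumes "residual_in (lp_topology p v) {x \<in> Y. distr_near_zero p v x}"
  shows "\<exists>x\<in>Y. x \<noteq> 0 \<and> distr_near_zero p v x"
proof -
  obtain \<F> where "countable \<F>" and \<F>: "\<And>U. U \<in> \<F> \<Longrightarrow> openin Y.mtopology U \<and> Y.mtopology closure_of U = Y"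
    and sub: "Y \<inter> \<Inter>\<F> \<subseteq> {x \<in> Y. distr_near_zero p v x}"
    using assms unfolding residual_in_def lp_topology_eq by auto
  have "Y.mtopology closure_of \<Inter>\<F> = Y"
    using \<F> by (intro Y.metric_Baire_category[OF mcomplete_Y \<open>countable \<F>\<close>]) auto
  define r where "r = wnorm p v (indicator {0})"
  have "r \<noteq> 0"
    using wnorm_eq_0_iff[OF indicator_0_in_Y] indicator_0_nonzero by (simp add: r_def)
  with wnorm_nonneg have "r > 0" by (simp add: r_def order_less_le)
  then obtain y where y: "y \<in> \<Inter>\<F>" "y \<in> Y.mball (indicator {0}) r"
    using \<open>Y.mtopology closure_of \<Inter>\<F> = Y\<close> indicator_0_in_Y unfolding Y.metric_closure_of by blast
  then have "y \<noteq> 0" by (auto simp: r_def)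
  with y sub show ?thesis by auto
qed

end

theorem mainTheorem9:
  fixes p :: real and v :: "int \<Rightarrow> real"
  assumes "1 \<le> p"
    and "\<And>n. v n > 0"
    and "bdd_above (range (\<lambda>n. v n / v (n + 1)))"
  shows "(residual_in (lp_topology p v) {x \<in> lp_weighted p v. distr_near_zero p v x}
            \<longleftrightarrow> (\<exists>x\<in>lp_weighted p v. x \<noteq> (\<lambda>_. 0) \<and> distr_near_zero p v x))
       \<and> ((\<exists>x\<in>lp_weighted p v. x \<noteq> (\<lambda>_. 0) \<and> distr_near_zero p v x)
            \<longleftrightarrow> (\<exists>A. upper_dens A = 1 \<and>
                   filterlim (\<lambda>n. v (- int n)) (nhds 0) (inf sequentially (principal A))))"
proof -
  interpret weighted_backward_shift p v
    using assms by unfold_locales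
  let ?residual = "residual_in (lp_topology p v) {x \<in> Y. distr_near_zero p v x}"
  let ?nonzero = "\<exists>x\<in>Y. x \<noteq> 0 \<and> distr_near_zero p v x"
  let ?decay = "\<exists>A. upper_dens A = 1 \<and> filterlim (\<lambda>n. v (- int n)) (nhds 0) (inf sequentially (principal A))"
  have "?residual \<Longrightarrow> ?nonzero"
    by (rule nonzero_distr_near_zero_if_residual)
  moreover have "?nonzero \<Longrightarrow> ?decay"
    using v_tendsto_zero_if_nonzero_distr_near_zero by blast
  moreover have "?decay \<Longrightarrow> ?residual"
    using residual_distr_near_zero_if_v_tendsto_zero by blast
  moreover have "?decay \<Longrightarrow> ?nonzero"
    using nonzero_distr_near_zero_if_v_tendsto_zero by blast
  ultimately show ?thesis
    unfolding zero_fun_def[symmetric] by argo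
qed

end
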